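(* Let $G=(\{f_i\},\{c_i\},\{X_i\},W)$ be a networked public goods game (as in the context). Suppose there exist $\boldsymbol{\gamma}\in\mathbb{R}_{++}^n$ and constants $c, L_0\ge 0$ such that (1) for every $i$ and every fixed $d\in[\underline{d}_i,\bar{d}_i]$, the function $x\mapsto\gamma_i\big(f_i(x+d)-c_i(x)\big)$ is $c$-concave on $X_i$; (2) $f_i'$ is $L_0$-Lipschitz for every $i$; (3) $c>L_0\,\sigma_{\max}(\Sigma)$, where $\Sigma=(\sigma_{ij})$ with $\sigma_{ij}=\sum_{k\ne i}\gamma_k|w_{ki}w_{kj}|$ and $\sigma_{\max}$ denotes the maximum singular value. Then $G$ has a unique (pure) Nash equilibrium.
   Context: There are $n$ players; player $i$ chooses effort $x_i\in X_i=[\underline{x}_i,\bar{x}_i]$, $X=\prod_iX_i$. $W=(w_{ij})$ is a real $n\times n$ matrix with $w_{ii}=1$. The gain of $i$ is $k_i=\sum_jw_{ij}x_j\in K_i=[\underline{k}_i,\bar{k}_i]$ (min and max over $X$). $f_i:K_i\to\mathbb{R}$ is twice differentiable, concave and strictly increasing; $c_i:X_i\to\mathbb{R}$ is twice differentiable, convex and strictly increasing; utility $u_i(\mathbf{x})=f_i(k_i)-c_i(x_i)$. A Nash equilibrium is $\mathbf{x}\in X$ with $u_i(x_i',\mathbf{x}_{-i})\le u_i(\mathbf{x})$ for all $i$, $x_i'\in X_i$. The externality gain bounds are $\underline{d}_i=\sum_{j\ne i}\big(\mathbf{1}\{w_{ij}>0\}w_{ij}\underline{x}_j+\mathbf{1}\{w_{ij}<0\}w_{ij}\bar{x}_j\big)$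 and $\bar{d}_i=\sum_{j\ne i}\big(\mathbf{1}\{w_{ij}>0\}w_{ij}\bar{x}_j+\mathbf{1}\{w_{ij}<0\}w_{ij}\underline{x}_j\big)$. A differentiable $g$ on a convex set is $c$-concave if $g(y)\le g(x)+\langle y-x,\nabla g(x)\rangle-\frac c2\|y-x\|^2$ for all $x,y$. *)

theory Defs
  imports "HOL-Analysis.Analysis"
begin

text \<open>Players are indexed by a finite type 'n (n = CARD('n)). Effort profiles are
vectors x :: real^'n, the network is W :: real^'n^'n, and the strategy set of player i
is the interval [lo$i, hi$i].\<close>

definition strat :: "real^'n \<Rightarrow> real^'n \<Rightarrow> 'n \<Rightarrow> real set" where
  "strat lo hi i = {lo$i .. hi$i}"

definition profiles :: "real^'n \<Rightarrow> real^'n \<Rightarrow> (real^'n) set" where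
  "profiles lo hi = {x. \<forall>i. x$i \<in> strat lo hi i}"

definition gain :: "real^'n^'n \<Rightarrow> 'n \<Rightarrow> real^'n \<Rightarrow> real" where
  "gain W i x = (\<Sum>j\<in>UNIV. W$i$j * x$j)"

definition gainset :: "real^'n^'n \<Rightarrow> real^'n \<Rightarrow> real^'n \<Rightarrow> 'n \<Rightarrow> real set" where
  "gainset W lo hi i = gain W i ` profiles lo hi"

definition utility :: "('n \<Rightarrow> real \<Rightarrow> real) \<Rightarrow> ('n \<Rightarrow> real \<Rightarrow> real) \<Rightarrow> real^'n^'n
    \<Rightarrow> 'n \<Rightarrow> real^'n \<Rightarrow> real" where
  "utility f c W i x = f i (gain W i x) - c i (x$i)"

definition upd :: "real^'n \<Rightarrow> 'n \<Rightarrow> real \<Rightarrow> real^'n" where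
  "upd x i t = (\<chi> j. if j = i then t else x$j)"

definition nash_eq :: "('n \<Rightarrow> real \<Rightarrow> real) \<Rightarrow> ('n \<Rightarrow> real \<Rightarrow> real) \<Rightarrow> real^'n^'n
    \<Rightarrow> real^'n \<Rightarrow> real^'n \<Rightarrow> real^'n \<Rightarrow> bool" where
  "nash_eq f c W lo hi x \<longleftrightarrow> x \<in> profiles lo hi \<and>
     (\<forall>i. \<forall>t\<in>strat lo hi i. utility f c W i (upd x i t) \<le> utility f c W i x)"

definition d_lo :: "real^'n^'n \<Rightarrow> real^'n \<Rightarrow> real^'n \<Rightarrow> 'n \<Rightarrow> real" where
  "d_lo W lo hi i = (\<Sum>j\<in>UNIV - {i}.
      (if W$i$j > 0 then W$i$j * lo$j else 0) + (if W$i$j < 0 then W$i$j * hi$j else 0))"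

definition d_hi :: "real^'n^'n \<Rightarrow> real^'n \<Rightarrow> real^'n \<Rightarrow> 'n \<Rightarrow> real" where
  "d_hi W lo hi i = (\<Sum>j\<in>UNIV - {i}.
      (if W$i$j > 0 then W$i$j * hi$j else 0) + (if W$i$j < 0 then W$i$j * lo$j else 0))"

text \<open>c-concavity of a differentiable real function on a convex set S (one-dimensional case;
the gradient is the derivative within S).\<close>
definition c_concave_on :: "real \<Rightarrow> real set \<Rightarrow> (real \<Rightarrow> real) \<Rightarrow> bool" where
  "c_concave_on cc S g \<longleftrightarrow> convex S \<and> (\<forall>x\<in>S. \<exists>D. (g has_real_derivative D) (at x within S) \<and>
      (\<forall>y\<in>S. g y \<le> g x + (y - x) * D - cc / 2 * (y - x)\<^sup>2))"

definition sigma_max :: "real^'n^'n \<Rightarrow> real" where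
  "sigma_max A = sqrt (Sup {e. \<exists>v. v \<noteq> 0 \<and> (transpose A ** A) *v v = e *\<^sub>R v})"

definition Sigma_mat :: "real^'n \<Rightarrow> real^'n^'n \<Rightarrow> real^'n^'n" where
  "Sigma_mat \<gamma> W = (\<chi> i j. \<Sum>k\<in>UNIV - {i}. \<gamma>$k * \<bar>W$k$i * W$k$j\<bar>)"

end

theory Submission
  imports Defs
begin

text \<open>Existence: the projected gradient map, which moves each effort x_i by the marginal payoff
  f_i'(k_i) - c_i'(x_i) and clamps the result to [lo_i, hi_i], is a continuous self-map of the box of
  profiles, so it has a Brouwer fixed point. At a fixed point every player satisfies her first-order
  condition, and since her payoff is concave in her own effort she is playing a best response.

  Uniqueness: for two equilibria x and y, write d^x_i, d^y_i for the externality gains of player i.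
  Testing the c-concavity of condition (1) at each equilibrium against the other and adding gives
  c |x_i - y_i|^2 <= gamma_i ((f_i(x_i + d^x_i) - f_i(x_i + d^y_i)) - (f_i(y_i + d^x_i) - f_i(y_i + d^y_i))),
  and the Lipschitz bound on f_i' turns the right-hand side into at most
  L0 gamma_i |x_i - y_i| sum_{j ~= i} |w_ij| |x_j - y_j|. Summing over i with a = |x - y| gives
  c |a|^2 <= L0 a.(Sigma a) <= L0 sigma_max(Sigma) |a|^2, which forces a = 0 by condition (3).\<close>

section \<open>Derivatives on convex sets of reals\<close>

lemma right_derivative_le_slope_bound:
  fixes \<phi> :: "real \<Rightarrow> real"
  assumes deriv: "(\<phi> has_real_derivative E) (at 0 within {0..1})"
    and slope: "\<And>s. 0 < s \<Longrightarrow> s \<le> 1 \<Longrightarrow> \<phi> s - \<phi> 0 \<le> s * B"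
  shows "E \<le> B"
proof -
  have "((\<lambda>s. (\<phi> s - \<phi> 0) / s) \<longlongrightarrow> E) (at_right 0)"
    using deriv by (simp add: has_field_derivative_iff at_within_Icc_at_right)
  moreover have "eventually (\<lambda>s. (\<phi> s - \<phi> 0) / s \<le> B) (at_right 0)"
    unfolding eventually_at_right_field
    by (intro exI[of _ 1]) (auto simp: divide_simps slope mult.commute)
  ultimately show ?thesis
    using tendsto_upperbound by force
qed

lemma has_real_derivative_along_segment:
  fixes g :: "real \<Rightarrow> real"
  assumes deriv: "(g has_real_derivative D) (at x within S)"
    and "convex S" "x \<in> S" "y \<in> S"
  shows "((\<lambda>s. g (x + s * (y - x))) has_real_derivative D * (y - x)) (at 0 within {0..1})"
proof -
  let ?p = "\<lambda>s. x + s * (y - x)"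
  have "?p ` {0..1} \<subseteq> S"
  proof
    fix z assume "z \<in> ?p ` {0..1}"
    then obtain s where "0 \<le> s" "s \<le> 1" "z = (1 - s) *\<^sub>R x + s *\<^sub>R y"
      by (auto simp: algebra_simps)
    then show "z \<in> S" using convexD_alt[OF assms(2-4), of s] by simp
  qed
  then have "(g has_real_derivative D) (at (?p 0) within ?p ` {0..1})"
    using DERIV_subset deriv by auto
  moreover have "(?p has_real_derivative (y - x)) (at 0 within {0..1})"
    by (auto intro!: derivative_eq_intros)
  ultimately show ?thesis
    using DERIV_image_chain by (fastforce simp: o_def)
qed

lemma DERIV_maximum_within_convex:
  fixes g :: "real \<Rightarrow> real"
  assumes deriv: "(g has_real_derivative D) (at x within S)"
    and S: "convex S" "x \<in> S" "y \<in> S"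
    and max: "\<And>t. t \<in> S \<Longrightarrow> g t \<le> g x"
  shows "D * (y - x) \<le> 0"
proof (rule right_derivative_le_slope_bound[OF has_real_derivative_along_segment[OF deriv S]])
  fix s :: real assume "0 < s" "s \<le> 1"
  then have "x + s * (y - x) \<in> S"
    using S convexD_alt[of S x y s] by (simp add: algebra_simps)
  then show "g (x + s * (y - x)) - g (x + 0 * (y - x)) \<le> s * 0"
    using max by simp
qed

lemma concave_on_le_tangent:
  fixes g :: "real \<Rightarrow> real"
  assumes conc: "concave_on S g" and deriv: "(g has_real_derivative D) (at x within S)"
    and S: "x \<in> S" "y \<in> S"
  shows "g y \<le> g x + D * (y - x)"
proof -
  have "convex S" using conc by (rule concave_on_imp_convex)
  have "- (D * (y - x)) \<le> - (g y - g x)"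
  proof (rule right_derivative_le_slope_bound)
    show "((\<lambda>s. - g (x + s * (y - x))) has_real_derivative - (D * (y - x))) (at 0 within {0..1})"
      using has_real_derivative_along_segment[OF deriv \<open>convex S\<close> S] by (rule DERIV_minus)
    fix s :: real assume "0 < s" "s \<le> 1"
    then have "(1 - s) * g x + s * g y \<le> g ((1 - s) *\<^sub>R x + s *\<^sub>R y)"
      using concave_onD[OF conc] S by simp
    then show "- g (x + s * (y - x)) - - g (x + 0 * (y - x)) \<le> s * - (g y - g x)"
      by (simp add: algebra_simps)
  qed
  then show ?thesis by simp
qed

lemma has_real_derivative_translate:
  fixes F :: "real \<Rightarrow> real"
  assumes deriv: "(F has_real_derivative D) (at (t + d) within K)"
    and sub: "(\<lambda>s. s + d) ` S \<subseteq> K"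
  shows "((\<lambda>s. F (s + d)) has_real_derivative D) (at t within S)"
proof -
  have "(F has_real_derivative D) (at ((\<lambda>s. s + d) t) within (\<lambda>s. s + d) ` S)"
    using DERIV_subset[OF deriv sub] by simp
  moreover have "((\<lambda>s. s + d) has_real_derivative 1) (at t within S)"
    by (auto intro!: derivative_eq_intros)
  ultimately show ?thesis
    using DERIV_image_chain by (fastforce simp: o_def)
qed

lemma concave_on_translate:
  fixes F :: "'a::real_vector \<Rightarrow> real"
  assumes conc: "concave_on K F" and "convex S" and sub: "(\<lambda>s. s + d) ` S \<subseteq> K"
  shows "concave_on S (\<lambda>s. F (s + d))"
  unfolding concave_on_iff
proof (intro conjI ballI allI impI \<open>convex S\<close>)
  fix x y and u v :: real
  assume "x \<in> S" "y \<in> S" "0 \<le> u" "0 \<le> v" "u + v = 1"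
  moreover from this have "u *\<^sub>R x + v *\<^sub>R y + d = u *\<^sub>R (x + d) + v *\<^sub>R (y + d)"
    by (simp add: algebra_simps flip: scaleR_add_left)
  ultimately show "u * F (x + d) + v * F (y + d) \<le> F (u *\<^sub>R x + v *\<^sub>R y + d)"
    using conc sub unfolding concave_on_iff by (metis image_subset_iff)
qed

lemma Lipschitz_derivative_mixed_difference_le:
  fixes F F' :: "real \<Rightarrow> real"
  assumes deriv: "\<And>k. k \<in> K \<Longrightarrow> (F has_real_derivative F' k) (at k within K)"
    and lip: "\<And>a b. a \<in> K \<Longrightarrow> b \<in> K \<Longrightarrow> \<bar>F' a - F' b\<bar> \<le> L * \<bar>a - b\<bar>"
    and S: "convex S" "s \<in> S" "s' \<in> S"
    and sub: "(\<lambda>u. u + d) ` S \<subseteq> K" "(\<lambda>u. u + e) ` S \<subseteq> K"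
  shows "\<bar>(F (s + d) - F (s + e)) - (F (s' + d) - F (s' + e))\<bar> \<le> L * \<bar>d - e\<bar> * \<bar>s - s'\<bar>"
proof -
  have "norm ((F (s + d) - F (s + e)) - (F (s' + d) - F (s' + e))) \<le> L * \<bar>d - e\<bar> * norm (s - s')"
  proof (rule field_differentiable_bound[OF S(1) _ _ S(2,3)])
    fix u assume "u \<in> S"
    then have K: "u + d \<in> K" "u + e \<in> K"
      using sub by auto
    show "((\<lambda>u. F (u + d) - F (u + e)) has_field_derivative F' (u + d) - F' (u + e)) (at u within S)"
      by (intro DERIV_diff has_real_derivative_translate[OF deriv] K sub)
    show "norm (F' (u + d) - F' (u + e)) \<le> L * \<bar>d - e\<bar>"
      using lip[OF K] by simp
  qed
  then show ?thesis by simp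
qed

section \<open>The largest singular value\<close>

lemma linear_plus_quadratic_nonneg_imp_zero:
  fixes b c :: real
  assumes nonneg: "\<And>t. 0 \<le> 2 * b * t + c * t\<^sup>2"
  shows "b = 0"
proof -
  define k where "k = \<bar>c\<bar> + 1"
  have k: "k > 0" by (simp add: k_def add_nonneg_pos)
  have "0 \<le> (2 * b * (- b / k) + c * (- b / k)\<^sup>2) * k\<^sup>2"
    by (intro mult_nonneg_nonneg nonneg) simp
  also have "\<dots> = b\<^sup>2 * (c - 2 * k)"
    using k by (simp add: field_simps power2_eq_square)
  finally have "0 \<le> b\<^sup>2 * (c - 2 * k)" .
  moreover have "c - 2 * k < 0"
    unfolding k_def by (simp add: abs_if)
  ultimately have "b\<^sup>2 \<le> 0"
    by (simp add: zero_le_mult_iff)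
  then show ?thesis
    by simp
qed

lemma inner_transpose_mult_mult:
  fixes M :: "real^'n^'m"
  shows "inner w ((transpose M ** M) *v u) = inner (M *v w) (M *v u)"
proof -
  have "(transpose M ** M) *v u = transpose M *v (M *v u)"
    by (simp add: matrix_vector_mul_assoc)
  also have "\<dots> = (M *v u) v* M"
    by simp
  finally have "inner w ((transpose M ** M) *v u) = inner ((M *v u) v* M) w"
    by (simp add: inner_commute)
  also have "\<dots> = inner (M *v u) (M *v w)"
    by (rule dot_lmul_matrix)
  finally show ?thesis
    by (simp add: inner_commute)
qed

lemma matrix_vector_mult_attains_norm_bound:
  fixes M :: "real^'n^'m"
  obtains v where "norm v = 1" and "\<And>u. norm (M *v u) \<le> norm (M *v v) * norm u"
proof -
  have "continuous_on (sphere 0 1) (\<lambda>u. norm (M *v u))"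
    by (intro continuous_intros linear_continuous_on) simp
  moreover obtain v0 :: "real^'n" where "norm v0 = 1"
    using vector_choose_size[of 1] by auto
  ultimately obtain v where v: "v \<in> sphere 0 1"
    and max: "\<And>u. u \<in> sphere 0 1 \<Longrightarrow> norm (M *v u) \<le> norm (M *v v)"
    using continuous_attains_sup[OF compact_sphere] by (metis empty_iff mem_sphere_0)
  have "norm (M *v u) \<le> norm (M *v v) * norm u" for u
  proof (cases "u = 0")
    case False
    then have "norm (M *v (inverse (norm u) *\<^sub>R u)) \<le> norm (M *v v)"
      by (intro max) simp
    then show ?thesis
      using False by (simp add: matrix_vector_mult_scaleR divide_simps mult.commute)
  qed simp
  with v that show ?thesis by simp
qed

text \<open>The quadratic form |M v|^2 |u|^2 - |M u|^2 is nonnegative and vanishes at u = v, so its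
  polarisation at v vanishes identically.\<close>
lemma max_stretch_eigenvector:
  fixes M :: "real^'n^'m"
  assumes unit: "norm v = 1" and max: "\<And>u. norm (M *v u) \<le> norm (M *v v) * norm u"
  shows "(transpose M ** M) *v v = (norm (M *v v))\<^sup>2 *\<^sub>R v"
proof -
  define \<mu> where "\<mu> = (norm (M *v v))\<^sup>2"
  define r where "r = \<mu> *\<^sub>R v - (transpose M ** M) *v v"
  have vv: "inner v v = 1" and \<mu>: "inner (M *v v) (M *v v) = \<mu>"
    using unit by (simp_all add: \<mu>_def dot_square_norm)
  have "inner (M *v v) (M *v r) = inner ((transpose M ** M) *v v) r"
    using inner_transpose_mult_mult[of r M v] by (simp add: inner_commute)
  then have "\<mu> * inner v r - inner (M *v v) (M *v r) = inner (\<mu> *\<^sub>R v - (transpose M ** M) *v v) r"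
    by (simp add: inner_diff_left)
  then have polar: "inner (M *v v) (M *v r) = \<mu> * inner v r - inner r r"
    by (simp add: r_def)
  have "0 \<le> 2 * inner r r * t + (\<mu> * inner r r - inner (M *v r) (M *v r)) * t\<^sup>2" for t
  proof -
    have "(norm (M *v (v + t *\<^sub>R r)))\<^sup>2 \<le> \<mu> * (norm (v + t *\<^sub>R r))\<^sup>2"
      unfolding \<mu>_def using max[of "v + t *\<^sub>R r"]
      by (metis norm_ge_zero power_mono power_mult_distrib)
    moreover have "(norm (M *v (v + t *\<^sub>R r)))\<^sup>2
        = \<mu> + 2 * t * inner (M *v v) (M *v r) + t\<^sup>2 * inner (M *v r) (M *v r)"
      unfolding power2_norm_eq_inner
      by (simp add: matrix_vector_right_distrib
          matrix_vector_mult_scaleR inner_add_left inner_add_right inner_commute \<mu>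
          algebra_simps power2_eq_square)
    moreover have "(norm (v + t *\<^sub>R r))\<^sup>2 = 1 + 2 * t * inner v r + t\<^sup>2 * inner r r"
      unfolding power2_norm_eq_inner
      by (simp add: inner_add_left inner_add_right inner_commute vv
          algebra_simps power2_eq_square)
    ultimately show ?thesis
      using polar by (simp add: algebra_simps)
  qed
  then have "inner r r = 0"
    by (rule linear_plus_quadratic_nonneg_imp_zero)
  then show ?thesis
    by (simp add: r_def \<mu>_def)
qed

lemma sigma_max_eq_max_stretch:
  fixes M :: "real^'n^'n"
  assumes unit: "norm v = 1" and max: "\<And>u. norm (M *v u) \<le> norm (M *v v) * norm u"
  shows "sigma_max M = norm (M *v v)"
proof -
  define E where "E = {e. \<exists>w. w \<noteq> 0 \<and> (transpose M ** M) *v w = e *\<^sub>R w}"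
  have "(norm (M *v v))\<^sup>2 \<in> E"
    unfolding E_def using max_stretch_eigenvector[OF assms] unit by (auto intro!: exI[of _ v])
  moreover have "e \<le> (norm (M *v v))\<^sup>2" if "e \<in> E" for e
  proof -
    obtain w where w: "w \<noteq> 0" "(transpose M ** M) *v w = e *\<^sub>R w"
      using \<open>e \<in> E\<close> unfolding E_def by blast
    have "e * (norm w)\<^sup>2 = (norm (M *v w))\<^sup>2"
      using inner_transpose_mult_mult[of w M w] w(2) by (simp add: dot_square_norm)
    also have "\<dots> \<le> ((norm (M *v v)) * norm w)\<^sup>2"
      using max[of w] by (simp add: power_mono)
    finally show ?thesis
      using w(1) by (simp add: power_mult_distrib)
  qed
  ultimately have "Sup E = (norm (M *v v))\<^sup>2"
    by (rule cSup_eq_maximum)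
  then show ?thesis
    unfolding sigma_max_def E_def by simp
qed

lemma norm_matrix_vector_le_sigma_max:
  fixes M :: "real^'n^'n"
  shows "norm (M *v a) \<le> sigma_max M * norm a"
proof -
  obtain v where "norm v = 1" and "\<And>u. norm (M *v u) \<le> norm (M *v v) * norm u"
    using matrix_vector_mult_attains_norm_bound[of M] by blast
  then show ?thesis
    using sigma_max_eq_max_stretch by metis
qed

section \<open>Best responses and existence of an equilibrium\<close>

definition ext_gain :: "real^'n^'n \<Rightarrow> 'n \<Rightarrow> real^'n \<Rightarrow> real" where
  "ext_gain W i x = (\<Sum>j\<in>UNIV - {i}. W$i$j * x$j)"

lemma upd_nth [simp]: "upd x i t $ j = (if j = i then t else x$j)"
  by (simp add: upd_def)

lemma upd_same [simp]: "upd x i (x$i) = x"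
  by (simp add: vec_eq_iff)

lemma ext_gain_upd [simp]: "ext_gain W i (upd x i t) = ext_gain W i x"
  unfolding ext_gain_def by (intro sum.cong) auto

lemma gain_eq_own_plus_ext_gain:
  assumes "W$i$i = 1"
  shows "gain W i x = x$i + ext_gain W i x"
  unfolding gain_def ext_gain_def using assms by (simp add: sum.remove[of UNIV i])

lemma utility_upd:
  assumes "W$i$i = 1"
  shows "utility f c W i (upd x i t) = f i (t + ext_gain W i x) - c i t"
  unfolding utility_def gain_eq_own_plus_ext_gain[OF assms] by simp

lemma profiles_eq_cbox: "profiles lo hi = cbox lo hi"
  unfolding profiles_def strat_def by (auto simp: mem_box_cart)

lemma upd_in_profiles:
  "x \<in> profiles lo hi \<Longrightarrow> t \<in> strat lo hi i \<Longrightarrow> upd x i t \<in> profiles lo hi"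
  unfolding profiles_def by auto

lemma gain_in_gainset: "x \<in> profiles lo hi \<Longrightarrow> gain W i x \<in> gainset W lo hi i"
  unfolding gainset_def by auto

lemma ext_gain_translate_in_gainset:
  assumes "W$i$i = 1" "x \<in> profiles lo hi"
  shows "(\<lambda>t. t + ext_gain W i x) ` strat lo hi i \<subseteq> gainset W lo hi i"
proof safe
  fix t assume "t \<in> strat lo hi i"
  then have "gain W i (upd x i t) \<in> gainset W lo hi i"
    by (intro gain_in_gainset upd_in_profiles assms(2))
  then show "t + ext_gain W i x \<in> gainset W lo hi i"
    by (simp add: gain_eq_own_plus_ext_gain[OF assms(1)])
qed

lemma ext_gain_bounds:
  assumes "x \<in> profiles lo hi"
  shows "ext_gain W i x \<in> {d_lo W lo hi i .. d_hi W lo hi i}"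
proof -
  have x: "lo$j \<le> x$j" "x$j \<le> hi$j" for j
    using assms unfolding profiles_def strat_def by auto
  have "(if W$i$j > 0 then W$i$j * lo$j else 0) + (if W$i$j < 0 then W$i$j * hi$j else 0)
      \<le> W$i$j * x$j" for j
    using x[of j] by (auto simp: mult_left_mono mult_left_mono_neg)
  moreover have "W$i$j * x$j
      \<le> (if W$i$j > 0 then W$i$j * hi$j else 0) + (if W$i$j < 0 then W$i$j * lo$j else 0)" for j
    using x[of j] by (auto simp: mult_left_mono mult_left_mono_neg)
  ultimately show ?thesis
    unfolding d_lo_def d_hi_def ext_gain_def by (auto intro: sum_mono)
qed

lemma nash_eq_iff_best_response:
  assumes "\<And>i. W$i$i = 1"
  shows "nash_eq f c W lo hi x \<longleftrightarrow> x \<in> profiles lo hi \<and>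
    (\<forall>i. \<forall>t\<in>strat lo hi i.
       f i (t + ext_gain W i x) - c i t \<le> f i (x$i + ext_gain W i x) - c i (x$i))"
  unfolding nash_eq_def using utility_upd[OF assms, of f c _ x] upd_same
  by metis

lemma clamp_fixed_point_variational_ineq:
  fixes l h x g t :: real
  assumes "max l (min h (x + g)) = x" "l \<le> t" "t \<le> h"
  shows "g * (t - x) \<le> 0"
  using assms by (auto simp: max_def min_def mult_le_0_iff split: if_splits)

lemma variational_ineq_imp_nash_eq:
  assumes diag: "\<And>i. W$i$i = 1"
    and f_d1: "\<And>i k. k \<in> gainset W lo hi i \<Longrightarrow>
                 (f i has_real_derivative f' i k) (at k within gainset W lo hi i)"
    and c_d1: "\<And>i t. t \<in> strat lo hi i \<Longrightarrow>
                 (c i has_real_derivative c' i t) (at t within strat lo hi i)"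
    and f_conc: "\<And>i. concave_on (gainset W lo hi i) (f i)"
    and c_conv: "\<And>i. convex_on (strat lo hi i) (c i)"
    and x: "x \<in> profiles lo hi"
    and vi: "\<And>i t. t \<in> strat lo hi i \<Longrightarrow> (f' i (gain W i x) - c' i (x$i)) * (t - x$i) \<le> 0"
  shows "nash_eq f c W lo hi x"
  unfolding nash_eq_iff_best_response[OF diag]
proof (intro conjI allI ballI x)
  fix i t assume t: "t \<in> strat lo hi i"
  define d where "d = ext_gain W i x"
  have xi: "x$i \<in> strat lo hi i"
    using x by (simp add: profiles_def)
  have sub: "(\<lambda>s. s + d) ` strat lo hi i \<subseteq> gainset W lo hi i"
    unfolding d_def by (rule ext_gain_translate_in_gainset[OF diag x])
  have "concave_on (strat lo hi i) (\<lambda>s. f i (s + d) - c i s)"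
    by (intro concave_on_diff concave_on_translate[OF f_conc _ sub] c_conv) (simp add: strat_def)
  moreover have "((\<lambda>s. f i (s + d) - c i s) has_real_derivative f' i (gain W i x) - c' i (x$i))
      (at (x$i) within strat lo hi i)"
    using has_real_derivative_translate[OF f_d1 sub] sub xi
    by (auto intro!: DERIV_diff c_d1 simp: gain_eq_own_plus_ext_gain[OF diag] d_def)
  ultimately have "f i (t + d) - c i t
      \<le> f i (x$i + d) - c i (x$i) + (f' i (gain W i x) - c' i (x$i)) * (t - x$i)"
    by (rule concave_on_le_tangent[OF _ _ xi t])
  then show "f i (t + d) - c i t \<le> f i (x$i + d) - c i (x$i)"
    using vi[OF t] by simp
qed

lemma nash_eq_exists:
  assumes diag: "\<And>i. W$i$i = 1"
    and lohi: "\<And>i. lo$i \<le> hi$i"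
    and f_d1: "\<And>i k. k \<in> gainset W lo hi i \<Longrightarrow>
                 (f i has_real_derivative f' i k) (at k within gainset W lo hi i)"
    and c_d1: "\<And>i t. t \<in> strat lo hi i \<Longrightarrow>
                 (c i has_real_derivative c' i t) (at t within strat lo hi i)"
    and f'_cont: "\<And>i. continuous_on (gainset W lo hi i) (f' i)"
    and c'_cont: "\<And>i. continuous_on (strat lo hi i) (c' i)"
    and f_conc: "\<And>i. concave_on (gainset W lo hi i) (f i)"
    and c_conv: "\<And>i. convex_on (strat lo hi i) (c i)"
  shows "\<exists>x. nash_eq f c W lo hi x"
proof -
  define G where "G x i = f' i (gain W i x) - c' i (x$i)" for x i
  define T where "T x = (\<chi> i. max (lo$i) (min (hi$i) (x$i + G x i)))" for x
  have "continuous_on (profiles lo hi) (\<lambda>x. G x i)" for i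
    unfolding G_def
  proof (intro continuous_on_diff continuous_on_compose2[OF f'_cont]
      continuous_on_compose2[OF c'_cont])
    show "continuous_on (profiles lo hi) (gain W i)"
      unfolding gain_def by (intro continuous_intros)
  qed (auto intro: gain_in_gainset continuous_intros simp: profiles_def)
  then have "continuous_on (cbox lo hi) T"
    unfolding T_def profiles_eq_cbox by (intro continuous_intros)
  moreover have "T \<in> cbox lo hi \<rightarrow> cbox lo hi"
    using lohi by (auto simp: T_def mem_box_cart)
  moreover have "lo \<in> cbox lo hi"
    using lohi by (simp add: mem_box_cart)
  ultimately obtain x where x: "x \<in> profiles lo hi" and fixed: "T x = x"
    unfolding profiles_eq_cbox using brouwer[OF compact_cbox convex_box(1)] by blast
  have "G x i * (t - x$i) \<le> 0" if "t \<in> strat lo hi i" for i t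
  proof (rule clamp_fixed_point_variational_ineq)
    show "max (lo$i) (min (hi$i) (x$i + G x i)) = x$i"
      using fixed by (metis T_def vec_lambda_beta)
  qed (use that in \<open>auto simp: strat_def\<close>)
  then show ?thesis
    unfolding G_def using variational_ineq_imp_nash_eq[OF diag f_d1 c_d1 f_conc c_conv x] by blast
qed

section \<open>Uniqueness of the equilibrium\<close>

lemma nash_eq_strong_concavity:
  assumes diag: "\<And>i. W$i$i = 1" and gamma_pos: "\<gamma>$i > 0"
    and cond1: "\<And>d. d \<in> {d_lo W lo hi i .. d_hi W lo hi i} \<Longrightarrow>
                 c_concave_on cc (strat lo hi i) (\<lambda>t. \<gamma>$i * (f i (t + d) - c i t))"
    and nash: "nash_eq f c W lo hi z" and w: "w \<in> strat lo hi i"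
  shows "\<gamma>$i * (f i (w + ext_gain W i z) - c i w)
    \<le> \<gamma>$i * (f i (z$i + ext_gain W i z) - c i (z$i)) - cc / 2 * (w - z$i)\<^sup>2"
proof -
  define h where "h t = \<gamma>$i * (f i (t + ext_gain W i z) - c i t)" for t
  have z: "z \<in> profiles lo hi" and zi: "z$i \<in> strat lo hi i"
    and best: "\<And>t. t \<in> strat lo hi i \<Longrightarrow> h t \<le> h (z$i)"
    using nash gamma_pos unfolding nash_eq_iff_best_response[OF diag] h_def
    by (auto simp: profiles_def)
  have "c_concave_on cc (strat lo hi i) h"
    unfolding h_def by (rule cond1[OF ext_gain_bounds[OF z]])
  then obtain D where deriv: "(h has_real_derivative D) (at (z$i) within strat lo hi i)"
    and below: "h w \<le> h (z$i) + (w - z$i) * D - cc / 2 * (w - z$i)\<^sup>2"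
    unfolding c_concave_on_def using zi w by blast
  have "D * (w - z$i) \<le> 0"
    by (rule DERIV_maximum_within_convex[OF deriv _ zi w best]) (simp add: strat_def)
  with below show ?thesis
    unfolding h_def by (simp add: mult.commute)
qed

lemma ext_gain_diff_le:
  "\<bar>ext_gain W i x - ext_gain W i y\<bar> \<le> (\<Sum>j\<in>UNIV - {i}. \<bar>W$i$j\<bar> * \<bar>x$j - y$j\<bar>)"
proof -
  have "ext_gain W i x - ext_gain W i y = (\<Sum>j\<in>UNIV - {i}. W$i$j * (x$j - y$j))"
    unfolding ext_gain_def by (simp add: sum_subtractf right_diff_distrib)
  also have "\<bar>\<dots>\<bar> \<le> (\<Sum>j\<in>UNIV - {i}. \<bar>W$i$j * (x$j - y$j)\<bar>)"
    by (rule sum_abs)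
  finally show ?thesis
    by (simp add: abs_mult)
qed

lemma nash_eq_pair_player_bound:
  assumes diag: "\<And>i. W$i$i = 1" and gamma_pos: "\<gamma>$i > 0" and L0_nonneg: "L0 \<ge> 0"
    and f_d1: "\<And>k. k \<in> gainset W lo hi i \<Longrightarrow>
                 (f i has_real_derivative f' i k) (at k within gainset W lo hi i)"
    and cond1: "\<And>d. d \<in> {d_lo W lo hi i .. d_hi W lo hi i} \<Longrightarrow>
                 c_concave_on cc (strat lo hi i) (\<lambda>t. \<gamma>$i * (f i (t + d) - c i t))"
    and cond2: "\<And>a b. a \<in> gainset W lo hi i \<Longrightarrow> b \<in> gainset W lo hi i \<Longrightarrow>
                 \<bar>f' i a - f' i b\<bar> \<le> L0 * \<bar>a - b\<bar>"
    and nx: "nash_eq f c W lo hi x" and ny: "nash_eq f c W lo hi y"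
  shows "cc * \<bar>x$i - y$i\<bar>\<^sup>2
    \<le> L0 * (\<gamma>$i * \<bar>x$i - y$i\<bar> * (\<Sum>j\<in>UNIV - {i}. \<bar>W$i$j\<bar> * \<bar>x$j - y$j\<bar>))"
proof -
  define dx where "dx = ext_gain W i x"
  define dy where "dy = ext_gain W i y"
  have x: "x \<in> profiles lo hi" and y: "y \<in> profiles lo hi"
    using nx ny by (simp_all add: nash_eq_def)
  then have xi: "x$i \<in> strat lo hi i" and yi: "y$i \<in> strat lo hi i"
    by (simp_all add: profiles_def)
  \<comment> \<open>Add the strong-concavity inequalities of the two equilibria, each tested at the other.\<close>
  have "cc * \<bar>x$i - y$i\<bar>\<^sup>2
      \<le> \<gamma>$i * ((f i (x$i + dx) - f i (x$i + dy)) - (f i (y$i + dx) - f i (y$i + dy)))"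
    using nash_eq_strong_concavity[OF diag gamma_pos cond1 nx yi]
      nash_eq_strong_concavity[OF diag gamma_pos cond1 ny xi]
    by (simp add: dx_def dy_def power2_commute algebra_simps)
  also have "\<dots> \<le> \<gamma>$i * (L0 * \<bar>dx - dy\<bar> * \<bar>x$i - y$i\<bar>)"
    using Lipschitz_derivative_mixed_difference_le[OF f_d1 cond2 _ xi yi
        ext_gain_translate_in_gainset[OF diag x] ext_gain_translate_in_gainset[OF diag y]]
      gamma_pos
    by (intro mult_left_mono) (auto simp: dx_def dy_def strat_def)
  also have "\<dots> \<le> \<gamma>$i * (L0 * (\<Sum>j\<in>UNIV - {i}. \<bar>W$i$j\<bar> * \<bar>x$j - y$j\<bar>) * \<bar>x$i - y$i\<bar>)"
    using ext_gain_diff_le[of W i x y] gamma_pos L0_nonneg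
    by (intro mult_left_mono mult_right_mono) (auto simp: dx_def dy_def)
  finally show ?thesis
    by (simp add: mult_ac)
qed

lemma weighted_neighbour_sum_le_Sigma_mat:
  fixes W :: "real^'n^'n" and a \<gamma> :: "real^'n"
  assumes diag: "\<And>i. W$i$i = 1" and a: "\<And>i. a$i \<ge> 0" and gamma_pos: "\<And>i. \<gamma>$i > 0"
  shows "(\<Sum>i\<in>UNIV. \<gamma>$i * a$i * (\<Sum>j\<in>UNIV - {i}. \<bar>W$i$j\<bar> * a$j))
    \<le> inner a (Sigma_mat \<gamma> W *v a)"
proof -
  define F where "F i j k = a$i * (\<gamma>$k * \<bar>W$k$i * W$k$j\<bar>) * a$j" for i j k
  have F_nonneg: "F i j k \<ge> 0" for i j k
    unfolding F_def using a gamma_pos by (simp add: less_imp_le)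
  \<comment> \<open>Keep only the terms with j = k, where W k k = 1.\<close>
  have "(\<Sum>i\<in>UNIV. \<gamma>$i * a$i * (\<Sum>j\<in>UNIV - {i}. \<bar>W$i$j\<bar> * a$j))
      = (\<Sum>k\<in>UNIV. \<Sum>i\<in>UNIV - {k}. F i k k)"
    unfolding F_def using diag by (simp add: sum_distrib_left abs_mult mult_ac)
  also have "\<dots> = (\<Sum>i\<in>UNIV. \<Sum>k\<in>UNIV - {i}. F i k k)"
    by (simp add: sum_diff1 sum_subtractf sum.swap[of "\<lambda>i k. F i k k"])
  also have "\<dots> \<le> (\<Sum>i\<in>UNIV. \<Sum>k\<in>UNIV - {i}. \<Sum>j\<in>UNIV. F i j k)"
    by (intro sum_mono member_le_sum) (auto simp: F_nonneg)
  also have "\<dots> = inner a (Sigma_mat \<gamma> W *v a)"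
    unfolding inner_vec_def Sigma_mat_def matrix_vector_mult_def F_def
    by (simp add: sum_distrib_left sum_distrib_right mult.assoc sum.swap[of _ "UNIV - {_}"])
  finally show ?thesis .
qed

lemma nash_eq_unique:
  fixes W :: "real^'n^'n"
  assumes diag: "\<And>i. W$i$i = 1" and gamma_pos: "\<And>i. \<gamma>$i > 0" and L0_nonneg: "L0 \<ge> 0"
    and f_d1: "\<And>i k. k \<in> gainset W lo hi i \<Longrightarrow>
                 (f i has_real_derivative f' i k) (at k within gainset W lo hi i)"
    and cond1: "\<And>i d. d \<in> {d_lo W lo hi i .. d_hi W lo hi i} \<Longrightarrow>
                 c_concave_on cc (strat lo hi i) (\<lambda>t. \<gamma>$i * (f i (t + d) - c i t))"
    and cond2: "\<And>i a b. a \<in> gainset W lo hi i \<Longrightarrow> b \<in> gainset W lo hi i \<Longrightarrow>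
                 \<bar>f' i a - f' i b\<bar> \<le> L0 * \<bar>a - b\<bar>"
    and cond3: "cc > L0 * sigma_max (Sigma_mat \<gamma> W)"
    and nx: "nash_eq f c W lo hi x" and ny: "nash_eq f c W lo hi y"
  shows "x = y"
proof -
  define a where "a = (\<chi> j. \<bar>x$j - y$j\<bar>)"
  define S where "S = Sigma_mat \<gamma> W"
  have "cc * (norm a)\<^sup>2 = (\<Sum>i\<in>UNIV. cc * \<bar>x$i - y$i\<bar>\<^sup>2)"
    unfolding power2_norm_eq_inner
    by (simp add: a_def inner_vec_def sum_distrib_left power2_eq_square)
  also have "\<dots> \<le> (\<Sum>i\<in>UNIV.
      L0 * (\<gamma>$i * \<bar>x$i - y$i\<bar> * (\<Sum>j\<in>UNIV - {i}. \<bar>W$i$j\<bar> * \<bar>x$j - y$j\<bar>)))"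
    by (intro sum_mono nash_eq_pair_player_bound[OF diag gamma_pos L0_nonneg f_d1 cond1 cond2 nx ny])
  also have "\<dots> \<le> L0 * inner a (S *v a)"
    using weighted_neighbour_sum_le_Sigma_mat[OF diag _ gamma_pos, of a] L0_nonneg
    by (simp add: sum_distrib_left[symmetric] mult_left_mono S_def a_def)
  also have "\<dots> \<le> L0 * (norm a * norm (S *v a))"
    by (intro mult_left_mono norm_cauchy_schwarz L0_nonneg)
  also have "\<dots> \<le> L0 * (norm a * (sigma_max S * norm a))"
    by (intro mult_left_mono norm_matrix_vector_le_sigma_max L0_nonneg norm_ge_zero)
  finally have "(cc - L0 * sigma_max S) * (norm a)\<^sup>2 \<le> 0"
    by (simp add: algebra_simps power2_eq_square)
  moreover have "cc - L0 * sigma_max S > 0"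
    using cond3 by (simp add: S_def)
  ultimately have "a = 0"
    by (simp add: mult_le_0_iff)
  then show ?thesis
    by (simp add: a_def vec_eq_iff)
qed

theorem theorem3p6:
  fixes W :: "real^'n^'n" and lo hi :: "real^'n"
    and f c f' c' f'' c'' :: "'n \<Rightarrow> real \<Rightarrow> real"
    and \<gamma> :: "real^'n" and cc L0 :: real
  assumes diag: "\<And>i. W$i$i = 1"
    and lohi: "\<And>i. lo$i \<le> hi$i"
    and f_d1: "\<And>i k. k \<in> gainset W lo hi i \<Longrightarrow>
                 (f i has_real_derivative f' i k) (at k within gainset W lo hi i)"
    and f_d2: "\<And>i k. k \<in> gainset W lo hi i \<Longrightarrow>
                 (f' i has_real_derivative f'' i k) (at k within gainset W lo hi i)"
    and f_conc: "\<And>i. concave_on (gainset W lo hi i) (f i)"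
    and f_incr: "\<And>i. strict_mono_on (gainset W lo hi i) (f i)"
    and c_d1: "\<And>i t. t \<in> strat lo hi i \<Longrightarrow>
                 (c i has_real_derivative c' i t) (at t within strat lo hi i)"
    and c_d2: "\<And>i t. t \<in> strat lo hi i \<Longrightarrow>
                 (c' i has_real_derivative c'' i t) (at t within strat lo hi i)"
    and c_conv: "\<And>i. convex_on (strat lo hi i) (c i)"
    and c_incr: "\<And>i. strict_mono_on (strat lo hi i) (c i)"
    and gamma_pos: "\<And>i. \<gamma>$i > 0"
    and cc_nonneg: "cc \<ge> 0" and L0_nonneg: "L0 \<ge> 0"
    and cond1: "\<And>i d. d \<in> {d_lo W lo hi i .. d_hi W lo hi i} \<Longrightarrow>
                 c_concave_on cc (strat lo hi i) (\<lambda>t. \<gamma>$i * (f i (t + d) - c i t))"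
    and cond2: "\<And>i a b. a \<in> gainset W lo hi i \<Longrightarrow> b \<in> gainset W lo hi i \<Longrightarrow>
                 \<bar>f' i a - f' i b\<bar> \<le> L0 * \<bar>a - b\<bar>"
    and cond3: "cc > L0 * sigma_max (Sigma_mat \<gamma> W)"
  shows "\<exists>!x. nash_eq f c W lo hi x"
proof -
  have "continuous_on (gainset W lo hi i) (f' i)" "continuous_on (strat lo hi i) (c' i)" for i
    using DERIV_continuous[OF f_d2] DERIV_continuous[OF c_d2]
    by (auto simp: continuous_on_eq_continuous_within)
  then obtain x where "nash_eq f c W lo hi x"
    using nash_eq_exists[OF diag lohi f_d1 c_d1 _ _ f_conc c_conv] by blast
  moreover have "y = z" if "nash_eq f c W lo hi y" "nash_eq f c W lo hi z" for y z
    by (rule nash_eq_unique[OF diag gamma_pos L0_nonneg f_d1 cond1 cond2 cond3 that])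
  ultimately show ?thesis
    by blast
qed

end
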